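(* Let $N,M,k$ be positive integers with $M\le N$, $\omega=e^{2\pi i/N}$, and for $x,s\in\mathbb{Z}_N$ let $|\phi_{x,s}\rangle=\frac{1}{\sqrt M}\sum_{b=0}^{M-1}|b,x+bs\rangle\in\mathbb{C}^{N}\otimes\mathbb{C}^N$ and $\rho_s=\frac1N\sum_{x\in\mathbb{Z}_N}|\phi_{x,s}\rangle\langle\phi_{x,s}|$. Consider the pretty good measurement for the ensemble $\{\rho_s^{\otimes k}\}_{s\in\mathbb{Z}_N}$ with uniform prior, i.e. the POVM with elements $E_j=\Sigma^{-1/2}\rho_j^{\otimes k}\Sigma^{-1/2}$ where $\Sigma=\sum_{j\in\mathbb{Z}_N}\rho_j^{\otimes k}$ and the inverse square root is taken on the support of $\Sigma$. Then for every $s\in\mathbb{Z}_N$, $$\mathrm{tr}(E_s\rho_s^{\otimes k})=\frac{1}{M^kN^{k+1}}\sum_{x\in\mathbb{Z}_N^k}\Big(\sum_{w\in\mathbb{Z}_N}\sqrt{\eta^x_w}\Big)^2,$$ where $\eta^x_w:=|\{b\in\{0,\ldots,M-1\}^k : b\cdot x\equiv w \pmod N\}|$.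
   Context: The states $\rho_s$ arise from the generalized hidden shift problem: given $f:\{0,\ldots,M-1\}\times\mathbb{Z}_N\to S$, injective in $x$ for each fixed $b$, with $f(b,x)=f(b+1,x+s)$ for $b=0,\ldots,M-2$, one prepares the uniform superposition over $(b,x)$, computes $f$ and measures its value. Here $|b\rangle$ for $b\in\{0,\ldots,M-1\}$ are computational basis states of the first register. *)

theory Defs
  imports Complex_Main "Jordan_Normal_Form.Matrix"
begin

definition cadj :: "complex mat \<Rightarrow> complex mat" where
  "cadj A = mat (dim_col A) (dim_row A) (\<lambda>(i,j). cnj (A $$ (j,i)))"

definition tr :: "complex mat \<Rightarrow> complex" where
  "tr A = (\<Sum>i<dim_row A. A $$ (i,i))"

definition unitary_mat :: "nat \<Rightarrow> complex mat \<Rightarrow> bool" where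
  "unitary_mat n U \<longleftrightarrow> U \<in> carrier_mat n n \<and> cadj U * U = 1\<^sub>m n \<and> U * cadj U = 1\<^sub>m n"

definition inv_sqrt_supp :: "complex mat \<Rightarrow> complex mat" where
  "inv_sqrt_supp A = (SOME X. \<exists>U d. unitary_mat (dim_row A) U \<and>
       (\<forall>i. d i \<in> \<real>) \<and>
       A = U * mat_diag (dim_row A) d * cadj U \<and>
       X = U * mat_diag (dim_row A)
             (\<lambda>i. if Re (d i) > 0 then complex_of_real (1 / sqrt (Re (d i))) else 0) * cadj U)"

(* Kronecker (tensor) product; index of A \<otimes> B is (i * dim B + i') *)
definition kron :: "complex mat \<Rightarrow> complex mat \<Rightarrow> complex mat" where
  "kron A B = mat (dim_row A * dim_row B) (dim_col A * dim_col B)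
     (\<lambda>(i,j). A $$ (i div dim_row B, j div dim_col B) * B $$ (i mod dim_row B, j mod dim_col B))"

fun tpow :: "complex mat \<Rightarrow> nat \<Rightarrow> complex mat" where
  "tpow A 0 = 1\<^sub>m 1"
| "tpow A (Suc k) = kron A (tpow A k)"

(* |phi_{x,s}> in C^N \<otimes> C^N; basis vector |b,y> has index b*N + y *)
definition phi :: "nat \<Rightarrow> nat \<Rightarrow> nat \<Rightarrow> nat \<Rightarrow> complex vec" where
  "phi N M x s = vec (N * N) (\<lambda>i. if i div N < M \<and> i mod N = (x + (i div N) * s) mod N
                                  then complex_of_real (1 / sqrt (real M)) else 0)"

definition rho :: "nat \<Rightarrow> nat \<Rightarrow> nat \<Rightarrow> complex mat" where
  "rho N M s = mat (N * N) (N * N)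
     (\<lambda>(i,j). (1 / of_nat N) * (\<Sum>x<N. phi N M x s $ i * cnj (phi N M x s $ j)))"

definition Sigma :: "nat \<Rightarrow> nat \<Rightarrow> nat \<Rightarrow> complex mat" where
  "Sigma N M k = mat ((N * N) ^ k) ((N * N) ^ k)
     (\<lambda>(a,b). \<Sum>j<N. tpow (rho N M j) k $$ (a,b))"

definition pgm :: "nat \<Rightarrow> nat \<Rightarrow> nat \<Rightarrow> nat \<Rightarrow> complex mat" where
  "pgm N M k j = inv_sqrt_supp (Sigma N M k) * tpow (rho N M j) k * inv_sqrt_supp (Sigma N M k)"

definition eta :: "nat \<Rightarrow> nat \<Rightarrow> nat \<Rightarrow> nat list \<Rightarrow> nat \<Rightarrow> nat" where
  "eta N M k xs w = card {bs. length bs = k \<and> set bs \<subseteq> {..<M} \<and>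
                          (\<Sum>i<k. bs ! i * xs ! i) mod N = w}"

end

(*
  Fourier transforming phi_{x,s} in x writes rho_s = sum_y |psi_{s,y}><psi_{s,y}|, so rho_s^(tensor k)
  is a sum of rank-one projectors onto product vectors Psi_{s,y}, y in Z_N^k.  Each Psi_{s,y} is a
  combination sum_w omega^(-s w) u_{y,w} of vectors u_{y,w}, supported on the b in {0..M-1}^k with
  b.y = w (mod N), which are common eigenvectors of Sigma with eigenvalue proportional to eta^y_w and
  are orthogonal to Psi_{s,y'} for y' <> y.  Hence Sigma^(-1/2) acts on them by scalars, the matrix
  <Psi_{s,y'}| Sigma^(-1/2) |Psi_{s,y}> is diagonal with entries proportional to sum_w sqrt(eta^y_w),
  and tr(E_s rho_s^(tensor k)) = tr((Sigma^(-1/2) rho_s^(tensor k))^2) is the sum of their squares.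
  As inv_sqrt_supp is defined through an arbitrary spectral decomposition, the spectral theorem for
  Hermitian matrices is needed; it is proved by Householder deflation.
*)

theory Submission
  imports Defs "Jordan_Normal_Form.Spectral_Radius"
begin

section \<open>Hermitian matrices and the spectral theorem\<close>

lemma index_mult_mat_sum [simp]:
  "i < dim_row A \<Longrightarrow> j < dim_col B \<Longrightarrow> dim_col A = dim_row B \<Longrightarrow>
    (A * B) $$ (i,j) = (\<Sum>l<dim_row B. A $$ (i,l) * B $$ (l,j))"
  by (simp add: scalar_prod_def lessThan_atLeast0)

lemma index_mult_mat_vec_sum [simp]:
  "i < dim_row A \<Longrightarrow> dim_col A = dim_vec v \<Longrightarrow> (A *\<^sub>v v) $ i = (\<Sum>l<dim_vec v. A $$ (i,l) * v $ l)"
  by (simp add: scalar_prod_def lessThan_atLeast0)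

(* Entries of products are normalised to sums over {..<n} rather than scalar products. *)
declare index_mult_mat(1)[simp del] index_mult_mat_vec[simp del]

lemma cadj_carrier [simp]: "A \<in> carrier_mat n m \<Longrightarrow> cadj A \<in> carrier_mat m n"
  by (simp add: cadj_def)

lemma cadj_dims [simp]: "dim_row (cadj A) = dim_col A" "dim_col (cadj A) = dim_row A"
  by (simp_all add: cadj_def)

lemma cadj_entry [simp]: "i < dim_col A \<Longrightarrow> j < dim_row A \<Longrightarrow> cadj A $$ (i,j) = cnj (A $$ (j,i))"
  by (simp add: cadj_def)

lemma cadj_mult:
  assumes "A \<in> carrier_mat n m" "B \<in> carrier_mat m p"
  shows "cadj (A * B) = cadj B * cadj A"
  by (rule eq_matI) (use assms in \<open>auto simp: mult.commute intro!: sum.cong\<close>)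

lemma cadj_cadj [simp]: "cadj (cadj A) = A"
  by (rule eq_matI) auto

definition hermitian :: "nat \<Rightarrow> complex mat \<Rightarrow> bool" where
  "hermitian n A \<longleftrightarrow> A \<in> carrier_mat n n \<and> cadj A = A"

lemma hermitian_entry:
  assumes "hermitian n A" "i < n" "j < n"
  shows "A $$ (i,j) = cnj (A $$ (j,i))"
  by (metis assms cadj_entry carrier_matD hermitian_def)

lemma hermitianI:
  assumes "A \<in> carrier_mat n n" "\<And>i j. i < n \<Longrightarrow> j < n \<Longrightarrow> A $$ (i,j) = cnj (A $$ (j,i))"
  shows "hermitian n A"
  unfolding hermitian_def by (auto intro!: eq_matI simp: assms(2)[symmetric] carrier_matD[OF assms(1)] assms(1))

lemma hermitian_conj:
  assumes "hermitian n A" "W \<in> carrier_mat n n"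
  shows "hermitian n (cadj W * A * W)"
proof -
  have A: "A \<in> carrier_mat n n" "cadj A = A" using assms(1) unfolding hermitian_def by auto
  have "cadj (cadj W * A * W) = cadj W * cadj (cadj W * A)"
    using assms(2) A by (intro cadj_mult) auto
  also have "\<dots> = cadj W * A * W"
    using assms(2) A by (simp add: cadj_mult[of _ n n] assoc_mult_mat[of _ n n _ n _ n] mult_carrier_mat[of _ n n])
  finally show ?thesis unfolding hermitian_def using assms(2) A by (simp add: mult_carrier_mat[of _ n n])
qed

lemma unitary_matD:
  assumes "unitary_mat n U"
  shows "U \<in> carrier_mat n n" "cadj U * U = 1\<^sub>m n" "U * cadj U = 1\<^sub>m n"
  using assms unfolding unitary_mat_def by auto

lemma unitary_matI:
  assumes "U \<in> carrier_mat n n" "cadj U * U = 1\<^sub>m n"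
  shows "unitary_mat n U"
  using assms mat_mult_left_right_inverse[of "cadj U" n U] unfolding unitary_mat_def by simp

lemma unitary_mat_cancel:
  assumes "unitary_mat n U" "X \<in> carrier_mat n m"
  shows "cadj U * (U * X) = X" "U * (cadj U * X) = X"
proof -
  have U: "U \<in> carrier_mat n n" "cadj U * U = 1\<^sub>m n" "U * cadj U = 1\<^sub>m n"
    using unitary_matD[OF assms(1)] by auto
  show "cadj U * (U * X) = X"
    using assoc_mult_mat[of "cadj U" n n U n X m] U assms(2) by simp
  show "U * (cadj U * X) = X"
    using assoc_mult_mat[of U n n "cadj U" n X m] U assms(2) by simp
qed

lemma unitary_mat_vec_cancel:
  assumes "unitary_mat n U" "v \<in> carrier_vec n"
  shows "cadj U *\<^sub>v (U *\<^sub>v v) = v" "U *\<^sub>v (cadj U *\<^sub>v v) = v"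
proof -
  have U: "U \<in> carrier_mat n n" "cadj U * U = 1\<^sub>m n" "U * cadj U = 1\<^sub>m n"
    using unitary_matD[OF assms(1)] by auto
  show "cadj U *\<^sub>v (U *\<^sub>v v) = v"
    using assoc_mult_mat_vec[of "cadj U" n n U n v] U assms(2) by simp
  show "U *\<^sub>v (cadj U *\<^sub>v v) = v"
    using assoc_mult_mat_vec[of U n n "cadj U" n v] U assms(2) by simp
qed

lemma unitary_mat_mult:
  assumes "unitary_mat n U" "unitary_mat n V"
  shows "unitary_mat n (U * V)"
proof (rule unitary_matI)
  have U: "U \<in> carrier_mat n n" and V: "V \<in> carrier_mat n n" "cadj V * V = 1\<^sub>m n"
    using assms unitary_matD by auto
  show "U * V \<in> carrier_mat n n" using U V by simp
  show "cadj (U * V) * (U * V) = 1\<^sub>m n"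
    using U V unitary_mat_cancel[OF assms(1) V(1)]
    by (simp add: cadj_mult[of _ n n] assoc_mult_mat[of _ n n _ n _ n] mult_carrier_mat[of _ n n])
qed

lemma unitary_conj_cancel:
  assumes "unitary_mat n W" "A \<in> carrier_mat n n"
  shows "W * (cadj W * A * W) * cadj W = A"
  using assms unitary_matD[OF assms(1)] unitary_mat_cancel[OF assms(1) assms(2)]
  by (simp add: assoc_mult_mat[of _ n n _ n _ n] mult_carrier_mat[of _ n n])

lemma index_mult_diag_cadj:
  assumes "U \<in> carrier_mat n n" "i < n" "j < n"
  shows "(U * mat_diag n d * cadj U) $$ (i,j) = (\<Sum>l<n. U $$ (i,l) * d l * cnj (U $$ (j,l)))"
  using assms by (simp add: mat_diag_mult_right[OF assms(1)] mult.assoc)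

lemma unit_eigenvector_exists:
  fixes A :: "complex mat"
  assumes A: "A \<in> carrier_mat n n" and n: "0 < n"
  obtains u r a where "(\<Sum>l<n. (cmod (u l))\<^sup>2) = 1" "u 0 = of_real r"
    "\<And>i. i < n \<Longrightarrow> (\<Sum>l<n. A $$ (i,l) * u l) = a * u i"
proof -
  obtain a v where v: "v \<in> carrier_vec n" "v \<noteq> 0\<^sub>v n" "A *\<^sub>v v = a \<cdot>\<^sub>v v"
    using spectrum_non_empty[OF A n] A unfolding spectrum_def eigenvalue_def eigenvector_def by auto
  have Av: "(\<Sum>l<n. A $$ (i,l) * v $ l) = a * v $ i" if "i < n" for i
    using arg_cong[OF v(3), of "\<lambda>x. x $ i"] that A v(1) by simp
  obtain i0 where i0: "i0 < n" "v $ i0 \<noteq> 0"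
    using v(1,2) by (metis carrier_vecD eq_vecI index_zero_vec)
  define nv where "nv = (\<Sum>l<n. (cmod (v $ l))\<^sup>2)"
  have nv: "0 < nv"
    unfolding nv_def using i0 by (intro sum_pos2[of _ i0]) auto
  \<comment> \<open>a phase making the first coordinate real, as the Householder reflection requires\<close>
  define ph where "ph = (if v $ 0 = 0 then 1 else cnj (v $ 0) / of_real (cmod (v $ 0)))"
  define u where "u l = ph * v $ l / of_real (sqrt nv)" for l
  have "cmod ph = 1" unfolding ph_def by (simp add: norm_divide)
  then have "(\<Sum>l<n. (cmod (u l))\<^sup>2) = (\<Sum>l<n. (cmod (v $ l))\<^sup>2) / nv"
    using nv by (simp add: u_def norm_mult norm_divide power_divide sum_divide_distrib)
  then have unit: "(\<Sum>l<n. (cmod (u l))\<^sup>2) = 1" using nv unfolding nv_def by simp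
  have "ph * v $ 0 = of_real (cmod (v $ 0))"
  proof (cases "v $ 0 = 0")
    case False
    then have "ph * v $ 0 = of_real ((cmod (v $ 0))\<^sup>2) / of_real (cmod (v $ 0))"
      unfolding ph_def complex_norm_square by (simp add: mult.commute)
    then show ?thesis using False by (simp add: power2_eq_square)
  qed (simp add: ph_def)
  then have real0: "u 0 = of_real (cmod (v $ 0) / sqrt nv)" unfolding u_def by simp
  have "(\<Sum>l<n. A $$ (i,l) * u l) = a * u i" if "i < n" for i
  proof -
    have "(\<Sum>l<n. A $$ (i,l) * u l) = ph / of_real (sqrt nv) * (\<Sum>l<n. A $$ (i,l) * v $ l)"
      unfolding sum_distrib_left by (rule sum.cong) (simp_all add: u_def)
    then show ?thesis using Av[OF that] by (simp add: u_def)
  qed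
  with unit real0 show thesis using that by blast
qed

definition reflection_mat :: "nat \<Rightarrow> complex \<Rightarrow> (nat \<Rightarrow> complex) \<Rightarrow> complex mat" where
  "reflection_mat n c w = mat n n (\<lambda>(i,j). (if i = j then 1 else 0) - c * w i * cnj (w j))"

lemma reflection_mat_entry:
  "i < n \<Longrightarrow> j < n \<Longrightarrow> reflection_mat n c w $$ (i,j) = (if i = j then 1 else 0) - c * w i * cnj (w j)"
  by (simp add: reflection_mat_def)

lemma unitary_reflection_mat:
  assumes real: "cnj c = c" and norm: "c * c * (\<Sum>l<n. cnj (w l) * w l) = 2 * c"
  shows "unitary_mat n (reflection_mat n c w)"
proof -
  let ?W = "reflection_mat n c w"
  have Wc: "?W \<in> carrier_mat n n" by (simp add: reflection_mat_def)
  have herm: "cadj ?W = ?W"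
    by (rule eq_matI) (use Wc real in \<open>auto simp: reflection_mat_entry\<close>)
  have "?W * ?W = 1\<^sub>m n"
  proof (rule eq_matI)
    fix i j assume "i < dim_row (1\<^sub>m n)" "j < dim_col (1\<^sub>m n)"
    then have ij: "i < n" "j < n" by auto
    have "(?W * ?W) $$ (i,j) = (\<Sum>l<n. ((if i = l then 1 else 0) - c * w i * cnj (w l))
        * ((if l = j then 1 else 0) - c * w l * cnj (w j)))"
      using Wc ij by (simp add: reflection_mat_entry)
    also have "\<dots> = (\<Sum>l<n. (if i = l then (if l = j then 1 else 0) - c * w l * cnj (w j) else 0)
        - (if l = j then c * w i * cnj (w l) else 0) + c * c * w i * cnj (w j) * (cnj (w l) * w l))"
      by (rule sum.cong) (auto simp: algebra_simps)
    also have "\<dots> = (\<Sum>l<n. if i = l then (if l = j then 1 else 0) - c * w l * cnj (w j) else 0)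
        - (\<Sum>l<n. if l = j then c * w i * cnj (w l) else 0)
        + c * c * w i * cnj (w j) * (\<Sum>l<n. cnj (w l) * w l)"
      by (simp add: sum.distrib sum_subtractf sum_distrib_left)
    also have "\<dots> = (if i = j then 1 else 0) + (c * c * (\<Sum>l<n. cnj (w l) * w l) - 2 * c) * (w i * cnj (w j))"
      using ij by (simp add: algebra_simps)
    finally show "(?W * ?W) $$ (i,j) = 1\<^sub>m n $$ (i,j)" using ij norm by simp
  qed (use Wc in auto)
  then show ?thesis using Wc herm by (simp add: unitary_mat_def)
qed

lemma householder_reflection:
  fixes u :: "nat \<Rightarrow> complex"
  assumes n: "0 < n" and unit: "(\<Sum>l<n. (cmod (u l))\<^sup>2) = 1" and real0: "u 0 = of_real r"
  shows "\<exists>W. unitary_mat n W \<and> (\<forall>i<n. W $$ (i,0) = u i)"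
proof -
  \<comment> \<open>\<open>I - 2 w w\<^sup>* / |w|\<^sup>2\<close> with \<open>w = e\<^sub>0 - u\<close> swaps \<open>e\<^sub>0\<close> and \<open>u\<close>\<close>
  define w where "w l = (if l = 0 then 1 else 0) - u l" for l
  define nw where "nw = (\<Sum>l<n. (cmod (w l))\<^sup>2)"
  define c where "c = 2 / complex_of_real nw"
  have nw_sum: "(\<Sum>l<n. cnj (w l) * w l) = of_real nw"
    unfolding nw_def of_real_sum by (rule sum.cong) (simp_all only: complex_norm_square mult.commute)
  have "(\<Sum>l<n. cnj (w l) * w l)
      = (\<Sum>l<n. (if l = 0 then 1 - u l - cnj (u l) else 0) + cnj (u l) * u l)"
    by (rule sum.cong) (simp_all add: w_def algebra_simps)
  also have "\<dots> = 1 - u 0 - cnj (u 0) + of_real (\<Sum>l<n. (cmod (u l))\<^sup>2)"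
    using n unfolding of_real_sum complex_norm_square by (simp add: sum.distrib mult.commute)
  finally have "complex_of_real nw = of_real (2 - 2 * r)"
    unfolding nw_sum unit real0 by simp
  then have nw_eq: "nw = 2 - 2 * r" by (rule of_real_eq_iff[THEN iffD1])
  have "c * c * (\<Sum>l<n. cnj (w l) * w l) = 2 * c"
    unfolding nw_sum by (cases "nw = 0") (simp_all add: c_def field_simps power2_eq_square)
  then have "unitary_mat n (reflection_mat n c w)"
    by (intro unitary_reflection_mat) (simp add: c_def)
  moreover have "reflection_mat n c w $$ (i,0) = u i" if i: "i < n" for i
  proof (cases "nw = 0")
    case True
    then have "w i = 0"
      using i unfolding nw_def by (subst (asm) sum_nonneg_eq_0_iff) auto
    then show ?thesis using True i n by (simp add: reflection_mat_entry c_def w_def split: if_splits)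
  next
    case False
    then have "c * cnj (w 0) = 1"
      unfolding c_def nw_eq using real0 by (simp add: w_def field_simps)
    moreover have "reflection_mat n c w $$ (i,0) = (if i = 0 then 1 else 0) - w i * (c * cnj (w 0))"
      using i n by (simp add: reflection_mat_entry mult_ac)
    ultimately show ?thesis by (simp add: w_def)
  qed
  ultimately show ?thesis by blast
qed

lemma unitary_deflation:
  assumes A: "A \<in> carrier_mat n n" and W: "unitary_mat n W" and n: "0 < n"
    and col0: "\<And>i. i < n \<Longrightarrow> W $$ (i,0) = u i"
    and eigen: "\<And>i. i < n \<Longrightarrow> (\<Sum>l<n. A $$ (i,l) * u l) = a * u i"
    and i: "i < n"
  shows "(cadj W * A * W) $$ (i,0) = (if i = 0 then a else 0)"
proof -
  have Wc: "W \<in> carrier_mat n n" and WW: "cadj W * W = 1\<^sub>m n" using unitary_matD[OF W] by auto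
  have "(cadj W * A * W) $$ (i,0) = (\<Sum>l<n. cnj (W $$ (l,i)) * (\<Sum>p<n. A $$ (l,p) * W $$ (p,0)))"
    using A Wc i n assoc_mult_mat[of "cadj W" n n A n W n] by simp
  also have "\<dots> = (\<Sum>l<n. cnj (W $$ (l,i)) * (a * W $$ (l,0)))"
    using col0 eigen by (intro sum.cong refl) (auto intro!: arg_cong2[where f = "(*)"] sum.cong)
  also have "\<dots> = a * (\<Sum>l<n. cnj (W $$ (l,i)) * W $$ (l,0))"
    by (simp add: sum_distrib_left mult_ac)
  also have "\<dots> = a * (cadj W * W) $$ (i,0)" using Wc i n by simp
  finally show ?thesis using WW i n by simp
qed

definition border_one :: "complex mat \<Rightarrow> complex mat" where
  "border_one U = mat (Suc (dim_row U)) (Suc (dim_col U))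
     (\<lambda>(i,j). if i = 0 \<and> j = 0 then 1 else if i = 0 \<or> j = 0 then 0 else U $$ (i - 1, j - 1))"

lemma border_one_carrier: "U \<in> carrier_mat m m \<Longrightarrow> border_one U \<in> carrier_mat (Suc m) (Suc m)"
  by (simp add: border_one_def)

lemma border_one_entry:
  "U \<in> carrier_mat m m \<Longrightarrow> i < Suc m \<Longrightarrow> j < Suc m \<Longrightarrow> border_one U $$ (i,j) =
    (if i = 0 \<and> j = 0 then 1 else if i = 0 \<or> j = 0 then 0 else U $$ (i - 1, j - 1))"
  by (simp add: border_one_def)

lemma unitary_border_one:
  assumes "unitary_mat m U"
  shows "unitary_mat (Suc m) (border_one U)"
proof (rule unitary_matI)
  have U: "U \<in> carrier_mat m m" "cadj U * U = 1\<^sub>m m" using unitary_matD[OF assms] by auto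
  note B = border_one_carrier[OF U(1)]
  show "cadj (border_one U) * border_one U = 1\<^sub>m (Suc m)"
  proof (rule eq_matI)
    fix i j assume "i < dim_row (1\<^sub>m (Suc m))" "j < dim_col (1\<^sub>m (Suc m))"
    then have ij: "i < Suc m" "j < Suc m" by auto
    have "(cadj (border_one U) * border_one U) $$ (i,j)
        = cnj (border_one U $$ (0,i)) * border_one U $$ (0,j)
          + (\<Sum>l<m. cnj (border_one U $$ (Suc l,i)) * border_one U $$ (Suc l,j))"
      using B ij by (simp add: sum.lessThan_Suc_shift del: sum.lessThan_Suc)
    also have "\<dots> = 1\<^sub>m (Suc m) $$ (i,j)"
    proof (cases "i = 0 \<or> j = 0")
      case True
      then show ?thesis using ij U(1) by (auto simp: border_one_entry)
    next
      case False
      then obtain i' j' where "i = Suc i'" "j = Suc j'" by (metis not0_implies_Suc)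
      moreover have "(\<Sum>l<m. cnj (U $$ (l,i')) * U $$ (l,j')) = (cadj U * U) $$ (i',j')"
        using U(1) ij \<open>i = Suc i'\<close> \<open>j = Suc j'\<close> by simp
      ultimately show ?thesis using ij U by (simp add: border_one_entry)
    qed
    finally show "(cadj (border_one U) * border_one U) $$ (i,j) = 1\<^sub>m (Suc m) $$ (i,j)" .
  qed (use B in auto)
qed (rule border_one_carrier[OF unitary_matD(1)[OF assms]])

lemma border_one_diag:
  assumes B: "B \<in> carrier_mat (Suc m) (Suc m)"
    and col0: "\<And>i. i < Suc m \<Longrightarrow> B $$ (i,0) = (if i = 0 then a else 0)"
    and row0: "\<And>j. j < Suc m \<Longrightarrow> B $$ (0,j) = (if j = 0 then a else 0)"
    and U: "U \<in> carrier_mat m m"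
    and minor: "mat m m (\<lambda>(i,j). B $$ (Suc i, Suc j)) = U * mat_diag m d * cadj U"
  shows "B = border_one U * mat_diag (Suc m) (case_nat a d) * cadj (border_one U)"
proof (rule eq_matI)
  fix i j assume "i < dim_row (border_one U * mat_diag (Suc m) (case_nat a d) * cadj (border_one U))"
    "j < dim_col (border_one U * mat_diag (Suc m) (case_nat a d) * cadj (border_one U))"
  then have ij: "i < Suc m" "j < Suc m" using U by (simp_all add: border_one_def)
  note BU = border_one_carrier[OF U]
  have "(border_one U * mat_diag (Suc m) (case_nat a d) * cadj (border_one U)) $$ (i,j)
      = border_one U $$ (i,0) * a * cnj (border_one U $$ (j,0))
        + (\<Sum>l<m. border_one U $$ (i,Suc l) * d l * cnj (border_one U $$ (j,Suc l)))"
    using index_mult_diag_cadj[OF BU ij] by (simp add: sum.lessThan_Suc_shift del: sum.lessThan_Suc)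
  also have "\<dots> = B $$ (i,j)"
  proof (cases "i = 0 \<or> j = 0")
    case True
    then show ?thesis using ij U col0 row0 by (auto simp: border_one_entry)
  next
    case False
    then obtain i' j' where ij': "i = Suc i'" "j = Suc j'" by (metis not0_implies_Suc)
    have "(\<Sum>l<m. U $$ (i',l) * d l * cnj (U $$ (j',l))) = B $$ (i,j)"
      using index_mult_diag_cadj[OF U, of i' j' d] arg_cong[OF minor, of "\<lambda>X. X $$ (i',j')"] ij ij'
      by simp
    then show ?thesis using ij ij' U by (simp add: border_one_entry)
  qed
  finally show "B $$ (i,j) = (border_one U * mat_diag (Suc m) (case_nat a d) * cadj (border_one U)) $$ (i,j)" ..
qed (use B U in \<open>simp_all add: border_one_def\<close>)

lemma unitary_conj_diag:
  assumes W: "unitary_mat n W" and A: "A \<in> carrier_mat n n" and V: "V \<in> carrier_mat n n"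
    and conj: "cadj W * A * W = V * mat_diag n d * cadj V"
  shows "A = (W * V) * mat_diag n d * cadj (W * V)"
proof -
  have Wc: "W \<in> carrier_mat n n" using unitary_matD[OF W] by simp
  have "A = W * (cadj W * A * W) * cadj W" using unitary_conj_cancel[OF W A] ..
  also have "\<dots> = (W * V) * mat_diag n d * cadj (W * V)"
    unfolding conj cadj_mult[OF Wc V] using Wc V
    by (simp add: assoc_mult_mat[of _ n n _ n _ n] mult_carrier_mat[of _ n n])
  finally show ?thesis .
qed

lemma hermitian_deflation:
  assumes "hermitian (Suc m) A"
  obtains W a where "unitary_mat (Suc m) W" "cnj a = a"
    "\<And>i. i < Suc m \<Longrightarrow> (cadj W * A * W) $$ (i,0) = (if i = 0 then a else 0)"
    "\<And>j. j < Suc m \<Longrightarrow> (cadj W * A * W) $$ (0,j) = (if j = 0 then a else 0)"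
proof -
  have A: "A \<in> carrier_mat (Suc m) (Suc m)" using assms by (simp add: hermitian_def)
  obtain u r a where unit: "(\<Sum>l<Suc m. (cmod (u l))\<^sup>2) = 1" and real0: "u 0 = of_real r"
    and eigen: "\<And>i. i < Suc m \<Longrightarrow> (\<Sum>l<Suc m. A $$ (i,l) * u l) = a * u i"
    using unit_eigenvector_exists[OF A zero_less_Suc] by blast
  obtain W where W: "unitary_mat (Suc m) W" and col0: "\<forall>i<Suc m. W $$ (i,0) = u i"
    using householder_reflection[OF zero_less_Suc unit real0] by blast
  let ?B = "cadj W * A * W"
  have hB: "hermitian (Suc m) ?B" by (rule hermitian_conj[OF assms unitary_matD(1)[OF W]])
  have col0B: "?B $$ (i,0) = (if i = 0 then a else 0)" if "i < Suc m" for i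
    by (rule unitary_deflation[OF A W zero_less_Suc _ eigen that]) (use col0 in blast)
  have "?B $$ (0,0) = cnj (?B $$ (0,0))" by (rule hermitian_entry[OF hB zero_less_Suc zero_less_Suc])
  then have a: "cnj a = a" using col0B[of 0] by simp
  have row0B: "?B $$ (0,j) = (if j = 0 then a else 0)" if "j < Suc m" for j
  proof -
    have "?B $$ (0,j) = cnj (?B $$ (j,0))" by (rule hermitian_entry[OF hB zero_less_Suc that])
    then show ?thesis using col0B[OF that] a by simp
  qed
  show thesis using that[OF W a col0B row0B] .
qed

theorem hermitian_spectral_decomposition:
  assumes "hermitian n A"
  shows "\<exists>U d. unitary_mat n U \<and> (\<forall>i. d i \<in> \<real>) \<and> A = U * mat_diag n d * cadj U"
  using assms
proof (induction n arbitrary: A)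
  case 0
  have "unitary_mat 0 (1\<^sub>m 0)" by (auto simp: unitary_mat_def intro!: eq_matI)
  moreover have "A = 1\<^sub>m 0 * mat_diag 0 (\<lambda>_. 0) * cadj (1\<^sub>m 0)"
    using "0" by (intro eq_matI) (auto simp: hermitian_def)
  ultimately show ?case by (intro exI[of _ "1\<^sub>m 0"] exI[of _ "\<lambda>_. 0"]) simp
next
  case (Suc m A)
  have A: "A \<in> carrier_mat (Suc m) (Suc m)" using Suc.prems by (simp add: hermitian_def)
  obtain W a where W: "unitary_mat (Suc m) W" and a: "cnj a = a"
    and col0B: "\<And>i. i < Suc m \<Longrightarrow> (cadj W * A * W) $$ (i,0) = (if i = 0 then a else 0)"
    and row0B: "\<And>j. j < Suc m \<Longrightarrow> (cadj W * A * W) $$ (0,j) = (if j = 0 then a else 0)"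
    using hermitian_deflation[OF Suc.prems] by blast
  have Wc: "W \<in> carrier_mat (Suc m) (Suc m)" using unitary_matD[OF W] by simp
  let ?B = "cadj W * A * W"
  have hB: "hermitian (Suc m) ?B" by (rule hermitian_conj[OF Suc.prems Wc])
  then have Bc: "?B \<in> carrier_mat (Suc m) (Suc m)" by (simp add: hermitian_def)
  define A' where "A' = mat m m (\<lambda>(i,j). ?B $$ (Suc i, Suc j))"
  have "hermitian m A'"
  proof (rule hermitianI)
    fix i j assume "i < m" "j < m"
    then show "A' $$ (i,j) = cnj (A' $$ (j,i))"
      unfolding A'_def using hermitian_entry[OF hB, of "Suc i" "Suc j"] by simp
  qed (simp add: A'_def)
  then obtain U' d' where U': "unitary_mat m U'" "\<forall>i. d' i \<in> \<real>" "A' = U' * mat_diag m d' * cadj U'"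
    using Suc.IH by blast
  have U'c: "U' \<in> carrier_mat m m" using unitary_matD[OF U'(1)] by simp
  have Bdec: "?B = border_one U' * mat_diag (Suc m) (case_nat a d') * cadj (border_one U')"
    by (rule border_one_diag[OF Bc col0B row0B U'c U'(3)[unfolded A'_def]])
  define U where "U = W * border_one U'"
  have "unitary_mat (Suc m) U" unfolding U_def by (intro unitary_mat_mult W unitary_border_one U'(1))
  moreover have "\<forall>i. case_nat a d' i \<in> \<real>" using a U'(2) by (auto simp: Reals_cnj_iff split: nat.split)
  moreover have "A = U * mat_diag (Suc m) (case_nat a d') * cadj U"
    unfolding U_def by (rule unitary_conj_diag[OF W A border_one_carrier[OF U'c] Bdec])
  ultimately show ?case by blast
qed

definition inv_sqrt_pos :: "real \<Rightarrow> real" where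
  "inv_sqrt_pos r = (if r > 0 then 1 / sqrt r else 0)"

lemma inv_sqrt_pos_mult_self:
  assumes "0 < T" "0 \<le> e"
  shows "inv_sqrt_pos (T * e) * e = sqrt e / sqrt T"
proof (cases "e = 0")
  case False
  then have "sqrt e * sqrt e = e" "0 < sqrt e" using assms(2) by simp_all
  then show ?thesis
    using assms by (simp add: inv_sqrt_pos_def real_sqrt_mult field_simps)
qed (simp add: inv_sqrt_pos_def)

lemma inv_sqrt_supp_decomposition:
  assumes "hermitian n A"
  obtains U d where "unitary_mat n U"
    "inv_sqrt_supp A = U * mat_diag n (\<lambda>i. of_real (inv_sqrt_pos (Re (d i)))) * cadj U"
    "A = U * mat_diag n d * cadj U"
proof -
  have n: "dim_row A = n" using assms unfolding hermitian_def by auto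
  let ?P = "\<lambda>X. \<exists>U d. unitary_mat (dim_row A) U \<and> (\<forall>i. d i \<in> \<real>) \<and>
       A = U * mat_diag (dim_row A) d * cadj U \<and>
       X = U * mat_diag (dim_row A)
             (\<lambda>i. if Re (d i) > 0 then complex_of_real (1 / sqrt (Re (d i))) else 0) * cadj U"
  have "\<exists>X. ?P X" unfolding n using hermitian_spectral_decomposition[OF assms] by blast
  then have "?P (inv_sqrt_supp A)" unfolding inv_sqrt_supp_def by (rule someI_ex)
  then show thesis using that unfolding n inv_sqrt_pos_def by (auto simp: if_distrib cong: if_cong)
qed

lemma inv_sqrt_supp_carrier:
  assumes "hermitian n A"
  shows "inv_sqrt_supp A \<in> carrier_mat n n"
  by (rule inv_sqrt_supp_decomposition[OF assms]) (simp add: unitary_mat_def mult_carrier_mat[of _ n n])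

lemma mat_diag_mult_vec:
  assumes "z \<in> carrier_vec n"
  shows "mat_diag n f *\<^sub>v z = vec n (\<lambda>i. f i * z $ i)"
proof (rule eq_vecI)
  fix i assume "i < dim_vec (vec n (\<lambda>i. f i * z $ i))"
  then have i: "i < n" by simp
  have "(mat_diag n f *\<^sub>v z) $ i = (\<Sum>l<n. if l = i then f l * z $ l else 0)"
    using i assms by (intro trans[OF index_mult_mat_vec_sum sum.cong]) (auto simp: mat_diag_def)
  then show "(mat_diag n f *\<^sub>v z) $ i = vec n (\<lambda>i. f i * z $ i) $ i" using i by simp
qed (simp add: mat_diag_def)

lemma inv_sqrt_supp_eigenvector:
  assumes A: "hermitian n A" and u: "u \<in> carrier_vec n" and Au: "A *\<^sub>v u = of_real r \<cdot>\<^sub>v u"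
  shows "inv_sqrt_supp A *\<^sub>v u = of_real (inv_sqrt_pos r) \<cdot>\<^sub>v u"
proof -
  obtain U d where U: "unitary_mat n U"
    and X: "inv_sqrt_supp A = U * mat_diag n (\<lambda>i. of_real (inv_sqrt_pos (Re (d i)))) * cadj U"
    and dec: "A = U * mat_diag n d * cadj U"
    by (rule inv_sqrt_supp_decomposition[OF A])
  define f where "f i = complex_of_real (inv_sqrt_pos (Re (d i)))" for i
  have Uc: "U \<in> carrier_mat n n" using unitary_matD[OF U] by auto
  have cUc: "cadj U \<in> carrier_mat n n" using Uc by simp
  \<comment> \<open>in the eigenbasis of \<open>A\<close> the vector \<open>z\<close> is supported where \<open>d i = r\<close>\<close>
  define z where "z = cadj U *\<^sub>v u"
  have zc: "z \<in> carrier_vec n" unfolding z_def using cUc u by simp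
  have mult_UDz: "(U * mat_diag n g * cadj U) *\<^sub>v u = U *\<^sub>v (mat_diag n g *\<^sub>v z)" for g
    unfolding z_def using Uc cUc u by (simp add: assoc_mult_mat_vec[of _ n n _ n] mult_carrier_mat[of _ n n] mult_mat_vec_carrier[of _ n n])
  have "cadj U *\<^sub>v (A *\<^sub>v u) = mat_diag n d *\<^sub>v z"
    unfolding dec mult_UDz by (intro unitary_mat_vec_cancel(1)[OF U] mult_mat_vec_carrier[OF mat_diag_dim zc])
  moreover have "cadj U *\<^sub>v (A *\<^sub>v u) = of_real r \<cdot>\<^sub>v z"
    unfolding Au z_def using cUc u by (rule mult_mat_vec)
  ultimately have dz: "d i * z $ i = of_real r * z $ i" if "i < n" for i
    using that zc by (metis (no_types) mat_diag_mult_vec index_smult_vec(1) index_vec carrier_vecD)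
  have "mat_diag n f *\<^sub>v z = of_real (inv_sqrt_pos r) \<cdot>\<^sub>v z"
  proof (rule eq_vecI)
    fix i assume "i < dim_vec (of_real (inv_sqrt_pos r) \<cdot>\<^sub>v z)"
    then have i: "i < n" using zc by simp
    have "f i * z $ i = of_real (inv_sqrt_pos r) * z $ i"
      using dz[OF i] by (cases "z $ i = 0") (auto simp: f_def)
    then show "(mat_diag n f *\<^sub>v z) $ i = (of_real (inv_sqrt_pos r) \<cdot>\<^sub>v z) $ i"
      using i zc by (simp add: mat_diag_mult_vec)
  qed (use zc in \<open>simp add: mat_diag_def\<close>)
  then have "inv_sqrt_supp A *\<^sub>v u = of_real (inv_sqrt_pos r) \<cdot>\<^sub>v (U *\<^sub>v z)"
    unfolding X f_def[symmetric] mult_UDz using Uc zc by (simp add: mult_mat_vec)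
  also have "U *\<^sub>v z = u"
    unfolding z_def by (rule unitary_mat_vec_cancel(2)[OF U u])
  finally show ?thesis .
qed

section \<open>Roots of unity, tuples and tensor powers\<close>

definition unit_root :: "nat \<Rightarrow> int \<Rightarrow> complex" where
  "unit_root N m = cis (2 * pi * of_int m / of_nat N)"

lemma unit_root_0 [simp]: "unit_root N 0 = 1"
  by (simp add: unit_root_def)

lemma unit_root_add: "unit_root N (a + b) = unit_root N a * unit_root N b"
  by (simp add: unit_root_def cis_mult add_divide_distrib distrib_left)

lemma unit_root_diff: "unit_root N (a - b) = unit_root N a * cnj (unit_root N b)"
  by (simp add: unit_root_def cis_cnj cis_mult diff_divide_distrib right_diff_distrib)

lemma cnj_unit_root_mult: "cnj (unit_root N a) * unit_root N b = unit_root N (b - a)"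
  by (simp add: unit_root_diff mult.commute)

lemma unit_root_neg_mult: "unit_root N (- (j * w')) * unit_root N (j * w) = unit_root N (j * (w - w'))"
  by (simp add: right_diff_distrib flip: unit_root_add)

lemma unit_root_eq_1_iff:
  assumes "0 < N"
  shows "unit_root N a = 1 \<longleftrightarrow> int N dvd a"
proof
  assume "unit_root N a = 1"
  then have "cos (2 * pi * of_int a / of_nat N) = 1"
    unfolding unit_root_def by (metis cis.sel(1) one_complex.sel(1))
  then obtain m :: int where "2 * pi * of_int a / of_nat N = of_int m * 2 * pi"
    using cos_one_2pi_int by blast
  then have "real_of_int a = of_int (m * int N)" using assms by (simp add: field_simps)
  then show "int N dvd a" by (metis dvd_triv_right of_int_eq_iff)
next
  assume "int N dvd a"
  then obtain m where "a = int N * m" by blast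
  then have "2 * pi * of_int a / of_nat N = 2 * pi * of_int m" using assms by simp
  then show "unit_root N a = 1" by (simp add: unit_root_def)
qed

lemma unit_root_cong:
  assumes "0 < N" "int N dvd (a - b)"
  shows "unit_root N a = unit_root N b"
proof -
  have "unit_root N a = unit_root N b * unit_root N (a - b)"
    by (metis unit_root_add add.commute diff_add_cancel)
  then show ?thesis using unit_root_eq_1_iff[OF assms(1), of "a - b"] assms(2) by simp
qed

lemma unit_root_mult_mod:
  assumes "0 < N"
  shows "unit_root N (c * int (x mod N)) = unit_root N (c * int x)"
proof (rule unit_root_cong[OF assms])
  have "int x = int N * int (x div N) + int (x mod N)"
    by (metis div_mult_mod_eq of_nat_add of_nat_mult mult.commute)
  then have "c * int (x mod N) - c * int x = int N * (- c * int (x div N))"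
    by (simp add: algebra_simps)
  then show "int N dvd (c * int (x mod N) - c * int x)" by simp
qed

lemma sum_unit_root:
  assumes N: "0 < N"
  shows "(\<Sum>z<N. unit_root N (int z * a)) = (if int N dvd a then of_nat N else 0)"
proof -
  have pow: "unit_root N (int z * a) = unit_root N a ^ z" for z
    unfolding unit_root_def DeMoivre by (simp add: field_simps)
  show ?thesis
  proof (cases "int N dvd a")
    case True
    then have "unit_root N (int z * a) = 1" for z by (simp add: unit_root_eq_1_iff[OF N])
    then show ?thesis using True by simp
  next
    case False
    then have "unit_root N a \<noteq> 1" by (simp add: unit_root_eq_1_iff[OF N])
    moreover have "unit_root N a ^ N = 1" by (simp add: pow[symmetric] unit_root_eq_1_iff[OF N])
    ultimately show ?thesis using False by (simp add: pow sum_gp_strict)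
  qed
qed

lemma int_dvd_diff_iff_eq:
  assumes "y < N" "y' < N"
  shows "int N dvd (int y - int y') \<longleftrightarrow> y = y'"
proof
  assume "int N dvd (int y - int y')"
  then have "int y mod int N = int y' mod int N" by (simp add: mod_eq_dvd_iff)
  then show "y = y'" using assms by simp
qed simp

definition tuples :: "nat \<Rightarrow> nat \<Rightarrow> nat list set" where
  "tuples k B = {xs. length xs = k \<and> set xs \<subseteq> {..<B}}"

lemma finite_tuples [simp]: "finite (tuples k B)"
  using finite_lists_length_eq[of "{..<B}" k] unfolding tuples_def by (simp add: conj_commute)

lemma tuples_0 [simp]: "tuples 0 B = {[]}"
  by (auto simp: tuples_def)

lemma tuples_Suc: "tuples (Suc k) B = (\<lambda>(x,xs). x # xs) ` ({..<B} \<times> tuples k B)"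
  by (auto simp: tuples_def length_Suc_conv image_iff)

lemma sum_tuples_Suc: "(\<Sum>xs\<in>tuples (Suc k) B. F xs) = (\<Sum>x<B. \<Sum>xs\<in>tuples k B. F (x # xs))"
proof -
  have "inj_on (\<lambda>(x,xs). x # xs) ({..<B} \<times> tuples k B)" by (auto simp: inj_on_def)
  then have "(\<Sum>xs\<in>tuples (Suc k) B. F xs) = (\<Sum>(x,xs)\<in>{..<B} \<times> tuples k B. F (x # xs))"
    unfolding tuples_Suc by (subst sum.reindex) (auto simp: case_prod_unfold)
  then show ?thesis by (simp add: sum.cartesian_product)
qed

lemma sum_lessThan_mult: "(\<Sum>a<m * K. G a) = (\<Sum>p<m. \<Sum>a<K. G (p * K + a :: nat))"
proof -
  have "sum G {p * K ..< p * K + K} = (\<Sum>a<K. G (p * K + a))" for p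
  proof -
    have "sum G {p * K ..< p * K + K} = sum G {0 + p * K ..< K + p * K}" by (simp add: add.commute)
    also have "\<dots> = (\<Sum>a<K. G (p * K + a))"
      unfolding sum.shift_bounds_nat_ivl by (simp add: lessThan_atLeast0 add.commute)
    finally show ?thesis .
  qed
  then show ?thesis by (simp add: sum.nat_group[symmetric])
qed

(* Base-n digits of a < n^k, most significant first: the index convention of kron. *)

fun digits :: "nat \<Rightarrow> nat \<Rightarrow> nat \<Rightarrow> nat list" where
  "digits n 0 a = []"
| "digits n (Suc k) a = (a div n ^ k) # digits n k (a mod n ^ k)"

lemma digits_in_tuples: "a < n ^ k \<Longrightarrow> digits n k a \<in> tuples k n"
proof (induction k arbitrary: a)
  case (Suc k)
  then have "a div n ^ k < n" by (simp add: less_mult_imp_div_less mult.commute)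
  moreover have "0 < n ^ k" using Suc.prems by (cases "n ^ k = 0") auto
  then have "digits n k (a mod n ^ k) \<in> tuples k n" by (intro Suc.IH) simp
  ultimately show ?case by (simp add: tuples_def)
qed simp

lemma sum_digits: "(\<Sum>a<n ^ k. F (digits n k a)) = (\<Sum>ds\<in>tuples k n. F ds)"
proof (induction k arbitrary: F)
  case (Suc k)
  have "(\<Sum>a<n ^ Suc k. F (digits n (Suc k) a)) = (\<Sum>p<n. \<Sum>a<n ^ k. F (p # digits n k a))"
    unfolding power_Suc sum_lessThan_mult by (intro sum.cong refl) simp
  also have "\<dots> = (\<Sum>p<n. \<Sum>ds\<in>tuples k n. F (p # ds))"
    by (intro sum.cong refl Suc.IH)
  also have "\<dots> = (\<Sum>ds\<in>tuples (Suc k) n. F ds)"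
    by (rule sum_tuples_Suc[symmetric])
  finally show ?case .
qed simp

definition join_digits :: "nat \<Rightarrow> nat list \<Rightarrow> nat list \<Rightarrow> nat list" where
  "join_digits N bs zs = map2 (\<lambda>b z. b * N + z) bs zs"

lemma join_digits_Cons [simp]: "join_digits N (b # bs) (z # zs) = (b * N + z) # join_digits N bs zs"
  by (simp add: join_digits_def)

lemma length_join_digits [simp]: "length (join_digits N bs zs) = min (length bs) (length zs)"
  by (simp add: join_digits_def)

lemma sum_tuples_join_digits:
  "(\<Sum>ds\<in>tuples k (N * N). F ds) = (\<Sum>bs\<in>tuples k N. \<Sum>zs\<in>tuples k N. F (join_digits N bs zs))"
proof (induction k arbitrary: F)
  case (Suc k)
  have "(\<Sum>ds\<in>tuples (Suc k) (N * N). F ds) = (\<Sum>b<N. \<Sum>z<N. \<Sum>ds\<in>tuples k (N * N). F ((b * N + z) # ds))"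
    by (simp add: sum_tuples_Suc sum_lessThan_mult)
  also have "\<dots> = (\<Sum>b<N. \<Sum>z<N. \<Sum>bs\<in>tuples k N. \<Sum>zs\<in>tuples k N. F ((b * N + z) # join_digits N bs zs))"
    by (intro sum.cong refl Suc.IH)
  also have "\<dots> = (\<Sum>b<N. \<Sum>bs\<in>tuples k N. \<Sum>z<N. \<Sum>zs\<in>tuples k N. F (join_digits N (b # bs) (z # zs)))"
    unfolding join_digits_Cons by (intro sum.cong refl sum.swap)
  finally show ?case by (simp add: sum_tuples_Suc)
qed (simp add: join_digits_def)

lemma join_digits_div_mod:
  assumes "length bs = length zs" "set zs \<subseteq> {..<N}"
  shows "map (\<lambda>p. p div N) (join_digits N bs zs) = bs" "map (\<lambda>p. p mod N) (join_digits N bs zs) = zs"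
  using assms by (induction bs zs rule: list_induct2) (auto simp: join_digits_def)

definition dot :: "nat \<Rightarrow> nat list \<Rightarrow> nat list \<Rightarrow> nat" where
  "dot k bs xs = (\<Sum>i<k. bs ! i * xs ! i)"

lemma dot_0 [simp]: "dot 0 bs xs = 0"
  by (simp add: dot_def)

lemma dot_Cons [simp]: "dot (Suc k) (b # bs) (x # xs) = b * x + dot k bs xs"
  unfolding dot_def by (subst sum.lessThan_Suc_shift) simp

lemma sum_tuples_unit_root_dot:
  assumes N: "0 < N"
  shows "ys \<in> tuples k N \<Longrightarrow> ys' \<in> tuples k N \<Longrightarrow>
    (\<Sum>zs\<in>tuples k N. unit_root N (int (dot k zs ys) - int (dot k zs ys'))) = (if ys = ys' then of_nat N ^ k else 0)"
proof (induction k arbitrary: ys ys')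
  case (Suc k)
  then obtain y t y' t' where ys: "ys = y # t" and ys': "ys' = y' # t'"
    and yt: "y < N" "t \<in> tuples k N" "y' < N" "t' \<in> tuples k N"
    unfolding tuples_def by (cases ys; cases ys') auto
  have "int (dot (Suc k) (z # zs) ys) - int (dot (Suc k) (z # zs) ys')
      = int z * (int y - int y') + (int (dot k zs t) - int (dot k zs t'))" for z zs
    unfolding ys ys' by (simp add: algebra_simps)
  then have "(\<Sum>zs\<in>tuples (Suc k) N. unit_root N (int (dot (Suc k) zs ys) - int (dot (Suc k) zs ys')))
      = (\<Sum>z<N. unit_root N (int z * (int y - int y'))) *
        (\<Sum>zs\<in>tuples k N. unit_root N (int (dot k zs t) - int (dot k zs t')))"
    by (simp add: sum_tuples_Suc unit_root_add sum_product)
  also have "\<dots> = (if ys = ys' then of_nat N ^ Suc k else 0)"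
    unfolding sum_unit_root[OF N] Suc.IH[OF yt(2,4)] int_dvd_diff_iff_eq[OF yt(1,3)] ys ys' by simp
  finally show ?case .
qed simp

lemma prod_list_map2_sum_products:
  fixes g :: "nat \<Rightarrow> 'a \<Rightarrow> complex"
  shows "length ds = k \<Longrightarrow> length es = k \<Longrightarrow>
    prod_list (map2 (\<lambda>p q. \<Sum>y<B. g y p * cnj (g y q)) ds es) =
    (\<Sum>ys\<in>tuples k B. prod_list (map2 g ys ds) * cnj (prod_list (map2 g ys es)))"
proof (induction k arbitrary: ds es)
  case (Suc k)
  then obtain d ds' e es' where ds: "ds = d # ds'" and es: "es = e # es'"
    and len: "length ds' = k" "length es' = k"
    by (cases ds; cases es) auto
  have "prod_list (map2 (\<lambda>p q. \<Sum>y<B. g y p * cnj (g y q)) ds es)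
      = (\<Sum>y<B. g y d * cnj (g y e)) *
        (\<Sum>ys\<in>tuples k B. prod_list (map2 g ys ds') * cnj (prod_list (map2 g ys es')))"
    unfolding ds es using Suc.IH[OF len] by simp
  also have "\<dots> = (\<Sum>y<B. \<Sum>ys\<in>tuples k B. prod_list (map2 g (y # ys) ds) * cnj (prod_list (map2 g (y # ys) es)))"
    unfolding sum_product ds es by (intro sum.cong refl) (simp add: mult_ac)
  finally show ?case by (simp add: sum_tuples_Suc)
qed simp

lemma tpow_carrier: "A \<in> carrier_mat n n \<Longrightarrow> tpow A k \<in> carrier_mat (n ^ k) (n ^ k)"
  by (induction k) (auto simp: kron_def)

lemma tpow_Suc_entry:
  assumes A: "A \<in> carrier_mat n n" and a: "a < n ^ Suc k" and c: "c < n ^ Suc k"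
  shows "tpow A (Suc k) $$ (a,c) = A $$ (a div n ^ k, c div n ^ k) * tpow A k $$ (a mod n ^ k, c mod n ^ k)"
proof -
  have T: "tpow A k \<in> carrier_mat (n ^ k) (n ^ k)" by (rule tpow_carrier[OF A])
  have "dim_row A * dim_row (tpow A k) = n ^ Suc k" "dim_col A * dim_col (tpow A k) = n ^ Suc k"
    using A T by auto
  then show ?thesis using a c A T unfolding tpow.simps kron_def by simp
qed

lemma tpow_entry:
  assumes A: "A \<in> carrier_mat n n"
  shows "a < n ^ k \<Longrightarrow> c < n ^ k \<Longrightarrow>
    tpow A k $$ (a,c) = prod_list (map2 (\<lambda>p q. A $$ (p,q)) (digits n k a) (digits n k c))"
proof (induction k arbitrary: a c)
  case (Suc k)
  have "0 < n ^ k" using Suc.prems by (cases "n ^ k = 0") auto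
  then have "a mod n ^ k < n ^ k" "c mod n ^ k < n ^ k" by simp_all
  from Suc.IH[OF this] show ?case unfolding tpow_Suc_entry[OF A Suc.prems] by simp
qed simp

section \<open>The states in the Fourier basis\<close>

definition amp :: "nat \<Rightarrow> nat \<Rightarrow> real" where
  "amp N M = 1 / (real N * sqrt (real M))"

definition shift_coord :: "nat \<Rightarrow> nat \<Rightarrow> nat \<Rightarrow> int" where
  "shift_coord N s p = int (p mod N) - int s * int (p div N)"

(* The basis vector |b,z> has index b * N + z.  Fourier transforming phi_{x,s} in x gives the
   vectors psi_{s,y} with rho_s = sum_y |psi_{s,y}><psi_{s,y}|; shift_coord N s p is z - s b. *)

definition psi :: "nat \<Rightarrow> nat \<Rightarrow> nat \<Rightarrow> nat \<Rightarrow> nat \<Rightarrow> complex" where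
  "psi N M s y p = (if p div N < M then of_real (amp N M) else 0) * unit_root N (int y * shift_coord N s p)"

lemma phi_entry:
  assumes N: "0 < N" and p: "p < N * N" and x: "x < N"
  shows "phi N M x s $ p =
    (if p div N < M \<and> int x = shift_coord N s p mod int N then of_real (1 / sqrt (real M)) else 0)"
proof -
  have "p mod N = (x + p div N * s) mod N \<longleftrightarrow> int (p mod N) = (int x + int (p div N) * int s) mod int N"
    by (metis of_nat_eq_iff of_nat_mod of_nat_add of_nat_mult)
  also have "\<dots> \<longleftrightarrow> int (p mod N) mod int N = (int x + int (p div N) * int s) mod int N"
    by (simp add: of_nat_mod[symmetric])
  also have "\<dots> \<longleftrightarrow> (int x) mod int N = shift_coord N s p mod int N"
    unfolding shift_coord_def mod_eq_dvd_iff by (simp add: dvd_diff_commute algebra_simps)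
  also have "\<dots> \<longleftrightarrow> int x = shift_coord N s p mod int N" using x by simp
  finally show ?thesis unfolding phi_def using p by simp
qed

lemma rho_entry_closed:
  assumes N: "0 < N" and p: "p < N * N" and q: "q < N * N"
  shows "rho N M s $$ (p,q) = (if p div N < M \<and> q div N < M \<and> int N dvd (shift_coord N s p - shift_coord N s q)
    then 1 / (of_nat N * of_nat M) else 0)"
proof -
  define x0 where "x0 r = nat (shift_coord N s r mod int N)" for r
  have x0: "x0 r < N" "int x = shift_coord N s r mod int N \<longleftrightarrow> x = x0 r" for r x
    unfolding x0_def using N by (auto simp: nat_less_iff)
  have sq: "complex_of_real (sqrt (real M)) * of_real (sqrt (real M)) = of_nat M"
    by (simp flip: of_real_mult)
  have "(\<Sum>x<N. phi N M x s $ p * cnj (phi N M x s $ q))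
      = (\<Sum>x<N. if x = x0 p then (if p div N < M \<and> q div N < M \<and> x0 p = x0 q then 1 / of_nat M else 0) else 0)"
    by (intro sum.cong refl) (auto simp: phi_entry[OF N p] phi_entry[OF N q] x0 sq)
  also have "\<dots> = (if p div N < M \<and> q div N < M \<and> x0 p = x0 q then 1 / of_nat M else 0)"
    using x0(1) by simp
  finally show ?thesis
    unfolding rho_def x0_def using p q N by (simp add: nat_eq_iff mod_eq_dvd_iff)
qed

lemma sum_psi_products:
  assumes N: "0 < N" and M: "0 < M"
  shows "(\<Sum>y<N. psi N M s y p * cnj (psi N M s y q)) = (if p div N < M \<and> q div N < M \<and>
    int N dvd (shift_coord N s p - shift_coord N s q) then 1 / (of_nat N * of_nat M) else 0)"
proof -
  have amp2: "of_real (amp N M) * of_real (amp N M) = (1 / (of_nat N * of_nat N * of_nat M) :: complex)"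
    using M by (simp add: amp_def flip: of_real_mult) (simp add: field_simps)
  have "(\<Sum>y<N. psi N M s y p * cnj (psi N M s y q))
      = (if p div N < M \<and> q div N < M then of_real (amp N M) * of_real (amp N M) else 0)
        * (\<Sum>y<N. unit_root N (int y * (shift_coord N s p - shift_coord N s q)))"
    unfolding sum_distrib_left
    by (intro sum.cong refl) (simp add: psi_def unit_root_diff right_diff_distrib)
  then show ?thesis using N unfolding sum_unit_root[OF N] amp2 by simp
qed

lemma rho_entry:
  assumes "0 < N" "0 < M" "p < N * N" "q < N * N"
  shows "rho N M s $$ (p,q) = (\<Sum>y<N. psi N M s y p * cnj (psi N M s y q))"
  using rho_entry_closed sum_psi_products assms by simp

lemma rho_carrier: "rho N M s \<in> carrier_mat (N * N) (N * N)"
  by (simp add: rho_def)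

definition Psi :: "nat \<Rightarrow> nat \<Rightarrow> nat \<Rightarrow> nat list \<Rightarrow> nat list \<Rightarrow> complex" where
  "Psi N M s ys ds = prod_list (map2 (psi N M s) ys ds)"

lemma tpow_rho_entry:
  assumes N: "0 < N" and M: "0 < M" and a: "a < (N * N) ^ k" and c: "c < (N * N) ^ k"
  shows "tpow (rho N M s) k $$ (a,c) =
    (\<Sum>ys\<in>tuples k N. Psi N M s ys (digits (N * N) k a) * cnj (Psi N M s ys (digits (N * N) k c)))"
proof -
  have da: "digits (N * N) k a \<in> tuples k (N * N)" and dc: "digits (N * N) k c \<in> tuples k (N * N)"
    using digits_in_tuples a c by auto
  have "tpow (rho N M s) k $$ (a,c) = prod_list (map2 (\<lambda>p q. rho N M s $$ (p,q)) (digits (N * N) k a) (digits (N * N) k c))"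
    by (rule tpow_entry[OF rho_carrier a c])
  also have "map2 (\<lambda>p q. rho N M s $$ (p,q)) (digits (N * N) k a) (digits (N * N) k c)
      = map2 (\<lambda>p q. \<Sum>y<N. psi N M s y p * cnj (psi N M s y q)) (digits (N * N) k a) (digits (N * N) k c)"
  proof (intro map_cong refl, clarify)
    fix p q assume pq: "(p, q) \<in> set (zip (digits (N * N) k a) (digits (N * N) k c))"
    have "p < N * N" "q < N * N"
      using set_zip_leftD[OF pq] set_zip_rightD[OF pq] da dc by (auto simp: tuples_def)
    then show "rho N M s $$ (p,q) = (\<Sum>y<N. psi N M s y p * cnj (psi N M s y q))"
      by (rule rho_entry[OF N M])
  qed
  also have "prod_list \<dots> =
      (\<Sum>ys\<in>tuples k N. Psi N M s ys (digits (N * N) k a) * cnj (Psi N M s ys (digits (N * N) k c)))"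
    unfolding Psi_def by (rule prod_list_map2_sum_products) (use da dc in \<open>auto simp: tuples_def\<close>)
  finally show ?thesis .
qed

definition b_coords_below :: "nat \<Rightarrow> nat \<Rightarrow> nat list \<Rightarrow> bool" where
  "b_coords_below N M ds \<longleftrightarrow> (\<forall>p\<in>set ds. p div N < M)"

lemma b_coords_below_join_digits:
  assumes "length bs = length zs" "set zs \<subseteq> {..<N}"
  shows "b_coords_below N M (join_digits N bs zs) \<longleftrightarrow> set bs \<subseteq> {..<M}"
  using join_digits_div_mod(1)[OF assms] unfolding b_coords_below_def
  by (metis (mono_tags, lifting) image_subset_iff lessThan_iff list.set_map)

lemma Psi_closed:
  "length ys = k \<Longrightarrow> length ds = k \<Longrightarrow> Psi N M s ys ds =
    (if b_coords_below N M ds then of_real (amp N M) ^ k else 0) *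
    unit_root N (int (dot k (map (\<lambda>p. p mod N) ds) ys) - int s * int (dot k (map (\<lambda>p. p div N) ds) ys))"
proof (induction k arbitrary: ys ds)
  case (Suc k)
  then obtain y ys' d ds' where ys: "ys = y # ys'" and ds: "ds = d # ds'"
    and len: "length ys' = k" "length ds' = k"
    by (cases ys; cases ds) auto
  have "unit_root N (int (dot (Suc k) (map (\<lambda>p. p mod N) ds) ys) - int s * int (dot (Suc k) (map (\<lambda>p. p div N) ds) ys))
      = unit_root N (int y * shift_coord N s d) *
        unit_root N (int (dot k (map (\<lambda>p. p mod N) ds') ys') - int s * int (dot k (map (\<lambda>p. p div N) ds') ys'))"
    unfolding ys ds by (simp add: shift_coord_def algebra_simps flip: unit_root_add)
  then show ?case
    using Suc.IH[OF len] unfolding ys ds by (auto simp: Psi_def psi_def b_coords_below_def)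
qed (simp add: Psi_def b_coords_below_def)

lemma Psi_join_digits:
  assumes "bs \<in> tuples k N" "zs \<in> tuples k N" "length ys = k"
  shows "Psi N M s ys (join_digits N bs zs) = (if set bs \<subseteq> {..<M} then of_real (amp N M) ^ k else 0) *
    unit_root N (int (dot k zs ys) - int s * int (dot k bs ys))"
proof -
  have "length bs = length zs" "set zs \<subseteq> {..<N}" "length (join_digits N bs zs) = k"
    using assms by (auto simp: tuples_def)
  then show ?thesis
    using Psi_closed[OF assms(3)] by (simp add: join_digits_div_mod b_coords_below_join_digits)
qed

section \<open>Common eigenvectors of Sigma\<close>

definition sigma_eigvec :: "nat \<Rightarrow> nat \<Rightarrow> nat list \<Rightarrow> nat \<Rightarrow> nat list \<Rightarrow> complex" where
  "sigma_eigvec N M ys w ds =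
    (if b_coords_below N M ds \<and> dot (length ys) (map (\<lambda>p. p div N) ds) ys mod N = w then 1 else 0) *
    unit_root N (int (dot (length ys) (map (\<lambda>p. p mod N) ds) ys))"

lemma sigma_eigvec_join_digits:
  assumes "bs \<in> tuples k N" "zs \<in> tuples k N" "length ys = k"
  shows "sigma_eigvec N M ys w (join_digits N bs zs) =
    (if set bs \<subseteq> {..<M} \<and> dot k bs ys mod N = w then 1 else 0) * unit_root N (int (dot k zs ys))"
  using assms by (simp add: sigma_eigvec_def tuples_def join_digits_div_mod b_coords_below_join_digits)

lemma Psi_eq_sum_sigma_eigvec:
  assumes N: "0 < N" and ys: "length ys = k" and ds: "length ds = k"
  shows "Psi N M s ys ds = of_real (amp N M) ^ k * (\<Sum>w<N. unit_root N (- (int s * int w)) * sigma_eigvec N M ys w ds)"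
proof -
  define db where "db = dot k (map (\<lambda>p. p div N) ds) ys"
  define dz where "dz = dot k (map (\<lambda>p. p mod N) ds) ys"
  have "unit_root N (- (int s * int (db mod N))) = unit_root N (- (int s * int db))"
    using unit_root_mult_mod[OF N, of "- int s" db] by simp
  moreover have "(\<Sum>w<N. unit_root N (- (int s * int w)) * sigma_eigvec N M ys w ds)
      = (\<Sum>w<N. if w = db mod N then (if b_coords_below N M ds
           then unit_root N (- (int s * int (db mod N))) * unit_root N (int dz) else 0) else 0)"
    by (intro sum.cong refl) (auto simp: sigma_eigvec_def ys db_def dz_def)
  ultimately have "(\<Sum>w<N. unit_root N (- (int s * int w)) * sigma_eigvec N M ys w ds)
      = (if b_coords_below N M ds then unit_root N (- (int s * int db)) * unit_root N (int dz) else 0)"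
    using N by simp
  moreover have "unit_root N (int dz - int s * int db) = unit_root N (- (int s * int db)) * unit_root N (int dz)"
    by (simp flip: unit_root_add)
  ultimately show ?thesis by (simp add: Psi_closed[OF ys ds] db_def dz_def)
qed

lemma sum_unit_root_eta:
  assumes N: "0 < N" and MN: "M \<le> N"
  shows "(\<Sum>bs\<in>tuples k N. if set bs \<subseteq> {..<M} \<and> dot k bs ys mod N = w
      then unit_root N (int s * int (dot k bs ys)) else 0) = of_nat (eta N M k ys w) * unit_root N (int s * int w)"
proof -
  let ?B = "{bs\<in>tuples k N. set bs \<subseteq> {..<M} \<and> dot k bs ys mod N = w}"
  have "unit_root N (int s * int (dot k bs ys)) = unit_root N (int s * int w)" if "dot k bs ys mod N = w" for bs
    using unit_root_mult_mod[OF N, of "int s" "dot k bs ys"] that by simp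
  then have "(\<Sum>bs\<in>tuples k N. if set bs \<subseteq> {..<M} \<and> dot k bs ys mod N = w
      then unit_root N (int s * int (dot k bs ys)) else 0) = (\<Sum>bs\<in>?B. unit_root N (int s * int w))"
    by (simp add: sum.inter_filter[symmetric] cong: if_cong)
  moreover have "?B = {bs. length bs = k \<and> set bs \<subseteq> {..<M} \<and> (\<Sum>i<k. bs ! i * ys ! i) mod N = w}"
    using MN unfolding tuples_def dot_def by auto
  ultimately show ?thesis by (simp add: eta_def)
qed

lemma inner_Psi_sigma_eigvec:
  assumes N: "0 < N" and MN: "M \<le> N" and ys: "ys \<in> tuples k N" and ys': "ys' \<in> tuples k N"
  shows "(\<Sum>ds\<in>tuples k (N * N). cnj (Psi N M s ys' ds) * sigma_eigvec N M ys w ds) =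
    (if ys = ys' then of_real (amp N M) ^ k * of_nat N ^ k * of_nat (eta N M k ys w) * unit_root N (int s * int w)
     else 0)"
proof -
  have len: "length ys = k" "length ys' = k" using ys ys' by (auto simp: tuples_def)
  define H where "H bs = (if set bs \<subseteq> {..<M} \<and> dot k bs ys mod N = w
    then of_real (amp N M) ^ k * unit_root N (int s * int (dot k bs ys')) else 0)" for bs
  have "(\<Sum>ds\<in>tuples k (N * N). cnj (Psi N M s ys' ds) * sigma_eigvec N M ys w ds)
      = (\<Sum>bs\<in>tuples k N. \<Sum>zs\<in>tuples k N. H bs * unit_root N (int (dot k zs ys) - int (dot k zs ys')))"
    unfolding sum_tuples_join_digits
  proof (intro sum.cong refl)
    fix bs zs assume "bs \<in> tuples k N" "zs \<in> tuples k N"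
    moreover have "cnj (unit_root N (int (dot k zs ys') - int s * int (dot k bs ys'))) * unit_root N (int (dot k zs ys))
        = unit_root N (int s * int (dot k bs ys')) * unit_root N (int (dot k zs ys) - int (dot k zs ys'))"
      unfolding cnj_unit_root_mult unit_root_add[symmetric]
      by (rule arg_cong[where f = "unit_root N"]) (simp add: algebra_simps)
    ultimately show "cnj (Psi N M s ys' (join_digits N bs zs)) * sigma_eigvec N M ys w (join_digits N bs zs)
        = H bs * unit_root N (int (dot k zs ys) - int (dot k zs ys'))"
      by (simp add: Psi_join_digits sigma_eigvec_join_digits len H_def mult_ac)
  qed
  also have "\<dots> = (\<Sum>bs\<in>tuples k N. H bs) * (if ys = ys' then of_nat N ^ k else 0)"
    by (simp add: sum_tuples_unit_root_dot[OF N ys ys'] sum_distrib_right flip: sum_distrib_left)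
  also have "(\<Sum>bs\<in>tuples k N. H bs) = of_real (amp N M) ^ k * (\<Sum>bs\<in>tuples k N. if set bs \<subseteq> {..<M} \<and>
      dot k bs ys mod N = w then unit_root N (int s * int (dot k bs ys')) else 0)"
    unfolding H_def sum_distrib_left by (intro sum.cong refl) simp
  finally show ?thesis by (simp add: sum_unit_root_eta[OF N MN] mult_ac)
qed

lemma Sigma_carrier: "Sigma N M k \<in> carrier_mat ((N * N) ^ k) ((N * N) ^ k)"
  by (simp add: Sigma_def)

lemma Sigma_entry:
  assumes "0 < N" "0 < M" "a < (N * N) ^ k" "c < (N * N) ^ k"
  shows "Sigma N M k $$ (a,c) =
    (\<Sum>j<N. \<Sum>ys\<in>tuples k N. Psi N M j ys (digits (N * N) k a) * cnj (Psi N M j ys (digits (N * N) k c)))"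
  using assms by (simp add: Sigma_def tpow_rho_entry)

lemma Sigma_hermitian:
  assumes "0 < N" "0 < M"
  shows "hermitian ((N * N) ^ k) (Sigma N M k)"
  by (rule hermitianI[OF Sigma_carrier]) (simp add: Sigma_entry assms mult.commute)

definition sigma_eigval :: "nat \<Rightarrow> nat \<Rightarrow> nat \<Rightarrow> nat list \<Rightarrow> nat \<Rightarrow> real" where
  "sigma_eigval N M k ys w = amp N M ^ (2 * k) * real N ^ (k + 1) * real (eta N M k ys w)"

lemma Sigma_mult_sigma_eigvec:
  assumes N: "0 < N" and M: "0 < M" and MN: "M \<le> N" and ys: "ys \<in> tuples k N" and w: "w < N"
    and a: "a < (N * N) ^ k"
  shows "(\<Sum>c<(N * N) ^ k. Sigma N M k $$ (a,c) * sigma_eigvec N M ys w (digits (N * N) k c))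
       = of_real (sigma_eigval N M k ys w) * sigma_eigvec N M ys w (digits (N * N) k a)"
proof -
  let ?da = "digits (N * N) k a"
  let ?U = "\<lambda>w ds. sigma_eigvec N M ys w ds"
  define C :: complex where "C = of_real (amp N M) ^ k * of_nat N ^ k * of_nat (eta N M k ys w)"
  have len: "length ys = k" "length ?da = k"
    using ys digits_in_tuples[OF a] by (auto simp: tuples_def)
  have "(\<Sum>c<(N * N) ^ k. Sigma N M k $$ (a,c) * ?U w (digits (N * N) k c))
      = (\<Sum>j<N. \<Sum>ys'\<in>tuples k N. Psi N M j ys' ?da *
          (\<Sum>c<(N * N) ^ k. cnj (Psi N M j ys' (digits (N * N) k c)) * ?U w (digits (N * N) k c)))"
    by (simp add: Sigma_entry[OF N M a] sum_distrib_left sum_distrib_right mult.assoc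
        sum.swap[of _ "{..<(N * N) ^ k}"])
  also have "\<dots> = (\<Sum>j<N. \<Sum>ys'\<in>tuples k N.
      if ys' = ys then Psi N M j ys ?da * (C * unit_root N (int j * int w)) else 0)"
  proof (intro sum.cong refl)
    fix j ys' assume "ys' \<in> tuples k N"
    moreover have "(\<Sum>c<(N * N) ^ k. cnj (Psi N M j ys' (digits (N * N) k c)) * ?U w (digits (N * N) k c))
        = (\<Sum>ds\<in>tuples k (N * N). cnj (Psi N M j ys' ds) * ?U w ds)"
      by (rule sum_digits)
    ultimately show "Psi N M j ys' ?da *
          (\<Sum>c<(N * N) ^ k. cnj (Psi N M j ys' (digits (N * N) k c)) * ?U w (digits (N * N) k c))
        = (if ys' = ys then Psi N M j ys ?da * (C * unit_root N (int j * int w)) else 0)"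
      by (cases "ys' = ys") (simp_all add: inner_Psi_sigma_eigvec[OF N MN ys] C_def)
  qed
  also have "\<dots> = (\<Sum>j<N. Psi N M j ys ?da * (C * unit_root N (int j * int w)))"
    using ys by simp
  also have "\<dots> = (\<Sum>j<N. \<Sum>w'<N. of_real (amp N M) ^ k * C *
      (?U w' ?da * unit_root N (int j * (int w - int w'))))"
    unfolding Psi_eq_sum_sigma_eigvec[OF N len] sum_distrib_left sum_distrib_right
    by (intro sum.cong refl) (simp only: unit_root_neg_mult[symmetric] ac_simps)
  also have "\<dots> = of_real (amp N M) ^ k * C *
      (\<Sum>w'<N. ?U w' ?da * (\<Sum>j<N. unit_root N (int j * (int w - int w'))))"
    by (subst sum.swap) (simp add: sum_distrib_left)
  also have "\<dots> = of_real (amp N M) ^ k * C * (?U w ?da * of_nat N)"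
    using w by (simp add: sum_unit_root[OF N] int_dvd_diff_iff_eq if_distrib sum.delta cong: if_cong)
  finally show ?thesis
    by (simp add: C_def sigma_eigval_def power_add mult_2_right mult_ac)
qed

section \<open>The success probability\<close>

definition mat_elem :: "nat \<Rightarrow> complex mat \<Rightarrow> (nat \<Rightarrow> complex) \<Rightarrow> (nat \<Rightarrow> complex) \<Rightarrow> complex" where
  "mat_elem n X u v = (\<Sum>a<n. cnj (u a) * (\<Sum>b<n. X $$ (a,b) * v b))"

lemma trace_mult_rank_one_sum:
  fixes v :: "'a \<Rightarrow> nat \<Rightarrow> complex"
  assumes X: "X \<in> carrier_mat n n" and R: "R \<in> carrier_mat n n"
    and R_eq: "\<And>b c. b < n \<Longrightarrow> c < n \<Longrightarrow> R $$ (b,c) = (\<Sum>y\<in>Y. v y b * cnj (v y c))"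
  shows "tr (X * R * X * R) = (\<Sum>y\<in>Y. \<Sum>y'\<in>Y. mat_elem n X (v y') (v y) * mat_elem n X (v y) (v y'))"
proof -
  define Xv where "Xv y a = (\<Sum>b<n. X $$ (a,b) * v y b)" for y a
  have XR: "(X * R) $$ (a,c) = (\<Sum>y\<in>Y. Xv y a * cnj (v y c))" if "a < n" "c < n" for a c
    using X R that by (simp add: R_eq Xv_def sum_distrib_left sum_distrib_right mult.assoc sum.swap[of _ "{..<n}"])
  let ?f = "\<lambda>a c y y'. (cnj (v y' a) * Xv y a) * (cnj (v y c) * Xv y' c)"
  have "X * R * X * R = (X * R) * (X * R)"
    by (rule assoc_mult_mat[OF mult_carrier_mat[OF X R] X R])
  then have "tr (X * R * X * R) = (\<Sum>a<n. \<Sum>c<n. (X * R) $$ (a,c) * (X * R) $$ (c,a))"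
    using X R by (simp add: tr_def mult_carrier_mat[of _ n n])
  also have "\<dots> = (\<Sum>a<n. \<Sum>c<n. \<Sum>y\<in>Y. \<Sum>y'\<in>Y. ?f a c y y')"
    by (intro sum.cong refl) (simp add: XR sum_product mult_ac)
  also have "\<dots> = (\<Sum>a<n. \<Sum>y\<in>Y. \<Sum>c<n. \<Sum>y'\<in>Y. ?f a c y y')"
    by (intro sum.cong refl sum.swap)
  also have "\<dots> = (\<Sum>y\<in>Y. \<Sum>a<n. \<Sum>y'\<in>Y. \<Sum>c<n. ?f a c y y')"
    by (subst sum.swap) (intro sum.cong refl sum.swap)
  also have "\<dots> = (\<Sum>y\<in>Y. \<Sum>y'\<in>Y. \<Sum>a<n. \<Sum>c<n. ?f a c y y')"
    by (intro sum.cong refl sum.swap)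
  also have "\<dots> = (\<Sum>y\<in>Y. \<Sum>y'\<in>Y. mat_elem n X (v y') (v y) * mat_elem n X (v y) (v y'))"
    by (simp add: mat_elem_def Xv_def sum_product)
  finally show ?thesis .
qed

lemma inv_sqrt_Sigma_sigma_eigvec:
  assumes N: "0 < N" and M: "0 < M" and MN: "M \<le> N" and ys: "ys \<in> tuples k N" and w: "w < N"
    and a: "a < (N * N) ^ k"
  shows "(\<Sum>c<(N * N) ^ k. inv_sqrt_supp (Sigma N M k) $$ (a,c) * sigma_eigvec N M ys w (digits (N * N) k c))
    = of_real (inv_sqrt_pos (sigma_eigval N M k ys w)) * sigma_eigvec N M ys w (digits (N * N) k a)"
proof -
  define u where "u = vec ((N * N) ^ k) (\<lambda>c. sigma_eigvec N M ys w (digits (N * N) k c))"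
  have u: "u \<in> carrier_vec ((N * N) ^ k)" by (simp add: u_def)
  have "Sigma N M k *\<^sub>v u = of_real (sigma_eigval N M k ys w) \<cdot>\<^sub>v u"
    using carrier_matD[OF Sigma_carrier[of N M k]]
    by (intro eq_vecI) (simp_all add: u_def Sigma_mult_sigma_eigvec[OF N M MN ys w])
  then have "inv_sqrt_supp (Sigma N M k) *\<^sub>v u = of_real (inv_sqrt_pos (sigma_eigval N M k ys w)) \<cdot>\<^sub>v u"
    by (rule inv_sqrt_supp_eigenvector[OF Sigma_hermitian[OF N M] u])
  from arg_cong[OF this, of "\<lambda>x. x $ a"] show ?thesis
    using a carrier_matD[OF inv_sqrt_supp_carrier[OF Sigma_hermitian[OF N M, of k]]] by (simp add: u_def)
qed

lemma inv_sqrt_Sigma_Psi: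
  assumes N: "0 < N" and M: "0 < M" and MN: "M \<le> N" and ys: "ys \<in> tuples k N"
    and a: "a < (N * N) ^ k"
  shows "(\<Sum>b<(N * N) ^ k. inv_sqrt_supp (Sigma N M k) $$ (a,b) * Psi N M s ys (digits (N * N) k b))
    = of_real (amp N M) ^ k * (\<Sum>w<N. unit_root N (- (int s * int w)) *
        of_real (inv_sqrt_pos (sigma_eigval N M k ys w)) * sigma_eigvec N M ys w (digits (N * N) k a))"
proof -
  let ?X = "inv_sqrt_supp (Sigma N M k)"
  have len: "length ys = k" "length (digits (N * N) k b) = k" if "b < (N * N) ^ k" for b
    using ys digits_in_tuples[OF that] by (auto simp: tuples_def)
  have "(\<Sum>b<(N * N) ^ k. ?X $$ (a,b) * Psi N M s ys (digits (N * N) k b))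
      = of_real (amp N M) ^ k * (\<Sum>w<N. unit_root N (- (int s * int w)) *
          (\<Sum>b<(N * N) ^ k. ?X $$ (a,b) * sigma_eigvec N M ys w (digits (N * N) k b)))"
    by (simp add: Psi_eq_sum_sigma_eigvec[OF N len] sum_distrib_left mult_ac sum.swap[of _ "{..<N}"])
  then show ?thesis
    by (simp add: inv_sqrt_Sigma_sigma_eigvec[OF N M MN ys _ a] mult.assoc)
qed

definition pgm_weight :: "nat \<Rightarrow> nat \<Rightarrow> nat \<Rightarrow> nat list \<Rightarrow> real" where
  "pgm_weight N M k ys = amp N M ^ (2 * k) * real N ^ k *
     (\<Sum>w<N. inv_sqrt_pos (sigma_eigval N M k ys w) * real (eta N M k ys w))"

lemma mat_elem_inv_sqrt_Sigma_Psi: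
  assumes N: "0 < N" and M: "0 < M" and MN: "M \<le> N" and ys: "ys \<in> tuples k N" and ys': "ys' \<in> tuples k N"
  shows "mat_elem ((N * N) ^ k) (inv_sqrt_supp (Sigma N M k))
      (\<lambda>a. Psi N M s ys' (digits (N * N) k a)) (\<lambda>b. Psi N M s ys (digits (N * N) k b))
    = (if ys = ys' then of_real (pgm_weight N M k ys) else 0)"
proof -
  let ?f = "\<lambda>w. of_real (inv_sqrt_pos (sigma_eigval N M k ys w)) :: complex"
  have "mat_elem ((N * N) ^ k) (inv_sqrt_supp (Sigma N M k))
      (\<lambda>a. Psi N M s ys' (digits (N * N) k a)) (\<lambda>b. Psi N M s ys (digits (N * N) k b))
    = of_real (amp N M) ^ k * (\<Sum>w<N. unit_root N (- (int s * int w)) * ?f w *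
        (\<Sum>a<(N * N) ^ k. cnj (Psi N M s ys' (digits (N * N) k a)) * sigma_eigvec N M ys w (digits (N * N) k a)))"
    unfolding mat_elem_def
    by (simp add: inv_sqrt_Sigma_Psi[OF N M MN ys] sum_distrib_left mult_ac sum.swap[of _ "{..<N}"])
  also have "\<dots> = of_real (amp N M) ^ k * (\<Sum>w<N. unit_root N (- (int s * int w)) * ?f w *
        (if ys = ys' then of_real (amp N M) ^ k * of_nat N ^ k * of_nat (eta N M k ys w) * unit_root N (int s * int w)
         else 0))"
    by (simp only: sum_digits[where F = "\<lambda>ds. cnj (Psi N M s ys' ds) * sigma_eigvec N M ys _ ds"]
        inner_Psi_sigma_eigvec[OF N MN ys ys'])
  also have "\<dots> = of_real (amp N M) ^ k * (if ys = ys' then (\<Sum>w<N.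
      (unit_root N (- (int s * int w)) * unit_root N (int s * int w)) *
      (of_real (amp N M) ^ k * of_nat N ^ k * (?f w * of_nat (eta N M k ys w)))) else 0)"
    by (simp add: sum_distrib_left mult_ac)
  also have "\<dots> = (if ys = ys' then of_real (pgm_weight N M k ys) else 0)"
    unfolding unit_root_add[symmetric]
    by (simp add: pgm_weight_def sum_distrib_left power_add mult_2_right mult_ac)
  finally show ?thesis .
qed

lemma pgm_weight_squared:
  assumes N: "0 < N" and M: "0 < M"
  shows "(pgm_weight N M k ys)\<^sup>2
    = 1 / (real M ^ k * real N ^ (k + 1)) * (\<Sum>w<N. sqrt (real (eta N M k ys w)))\<^sup>2"
proof -
  define T where "T = amp N M ^ (2 * k) * real N ^ (k + 1)"
  define S where "S = (\<Sum>w<N. sqrt (real (eta N M k ys w)))"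
  have amp2: "amp N M ^ (2 * k) = 1 / (real N ^ (2 * k) * real M ^ k)"
    using M by (simp add: amp_def power_mult power_divide power_mult_distrib)
  then have T: "0 < T" using N M by (simp add: T_def)
  have "inv_sqrt_pos (sigma_eigval N M k ys w) * real (eta N M k ys w) = sqrt (real (eta N M k ys w)) / sqrt T" for w
    using inv_sqrt_pos_mult_self[OF T, of "real (eta N M k ys w)"] by (simp add: sigma_eigval_def T_def)
  then have "pgm_weight N M k ys = amp N M ^ (2 * k) * real N ^ k * (S / sqrt T)"
    by (simp add: pgm_weight_def S_def sum_divide_distrib)
  also have "(\<dots>)\<^sup>2 = amp N M ^ (2 * k) * real N ^ (2 * k) / real N ^ (k + 1) * S\<^sup>2"
    using T N by (simp add: T_def power_mult_distrib power_divide power2_eq_square power_add mult_2_right field_simps)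
  finally show ?thesis
    using N by (simp add: amp2 S_def)
qed

theorem mainTheorem6:
  fixes N M k s :: nat
  assumes "0 < N" and "0 < M" and "0 < k" and "M \<le> N" and "s < N"
  shows "tr (pgm N M k s * tpow (rho N M s) k) =
    complex_of_real (1 / (real M ^ k * real N ^ (k + 1)) *
      (\<Sum>xs\<in>{xs. length xs = k \<and> set xs \<subseteq> {..<N}}.
         (\<Sum>w<N. sqrt (real (eta N M k xs w)))\<^sup>2))"
proof -
  note N = \<open>0 < N\<close> and M = \<open>0 < M\<close> and MN = \<open>M \<le> N\<close>
  let ?X = "inv_sqrt_supp (Sigma N M k)" and ?R = "tpow (rho N M s) k"
  have X: "?X \<in> carrier_mat ((N * N) ^ k) ((N * N) ^ k)"
    by (rule inv_sqrt_supp_carrier[OF Sigma_hermitian[OF N M]])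
  have R: "?R \<in> carrier_mat ((N * N) ^ k) ((N * N) ^ k)"
    by (rule tpow_carrier[OF rho_carrier])
  have "tr (pgm N M k s * ?R) = tr (?X * ?R * ?X * ?R)"
    by (simp add: pgm_def)
  also have "\<dots> = (\<Sum>ys\<in>tuples k N. \<Sum>ys'\<in>tuples k N.
      mat_elem ((N * N) ^ k) ?X (\<lambda>a. Psi N M s ys' (digits (N * N) k a)) (\<lambda>b. Psi N M s ys (digits (N * N) k b)) *
      mat_elem ((N * N) ^ k) ?X (\<lambda>a. Psi N M s ys (digits (N * N) k a)) (\<lambda>b. Psi N M s ys' (digits (N * N) k b)))"
    by (rule trace_mult_rank_one_sum[OF X R tpow_rho_entry[OF N M]])
  also have "\<dots> = (\<Sum>ys\<in>tuples k N. of_real ((pgm_weight N M k ys)\<^sup>2))"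
    by (simp add: mat_elem_inv_sqrt_Sigma_Psi[OF N M MN] power2_eq_square if_distrib sum.delta cong: if_cong)
  finally show ?thesis
    by (simp add: pgm_weight_squared[OF N M] sum_distrib_left tuples_def)
qed

end
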